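(* Let $A\in\mathbb{S}^{\omega n}$ be positive definite, viewed as an $\omega\times\omega$ block matrix with blocks $A_{i,j}\in\mathbb{R}^{n\times n}$, and suppose $A$ is $q$-banded for an even positive integer $q$, i.e., $A_{i,j}=0$ whenever $|i-j|>q/2$. Let $[a_0,b_0]$ ($b_0>a_0>0$) be the smallest interval containing the spectrum of $A$. Let $D=\mathrm{diag}(D_1,\dots,D_\omega)$ with each $D_i\in\mathbb{S}^n$ positive semidefinite. For nonempty $S_R,S_C\subseteq\{1,\dots,\omega\}$ let $M=((A+D)^{-1})_{S_R,S_C}$. Then $\|M\|\le C\gamma^{\hat d}$, where \[C=\frac{2}{a_0},\quad \gamma=\left(\frac{\sqrt{\mathrm{cond}(A)}-1}{\sqrt{\mathrm{cond}(A)}+1}\right)^{2/q},\quad \hat d=\min_{i\in S_R,\,j\in S_C}|i-j|,\] and $\mathrm{cond}(A)=b_0/a_0$.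
   Context: $\|\cdot\|$ is the induced matrix 2-norm; $\mathbb{S}^k$ denotes the symmetric $k\times k$ real matrices. For an $\omega\times\omega$ block matrix $X$ with blocks $X_{i,j}\in\mathbb{R}^{n\times n}$ and sets $S_R=\{i_1<\dots<i_{|S_R|}\}$, $S_C=\{j_1<\dots<j_{|S_C|}\}$, $X_{S_R,S_C}\in\mathbb{R}^{|S_R|n\times|S_C|n}$ is the block matrix whose $(r,s)$ block is $X_{i_r,j_s}$. *)

theory Defs
  imports "HOL-Analysis.Analysis"
begin

text \<open>Block matrices: an (omega n) x (omega n) real matrix is represented with row/column
index type ('w \<times> 'b), where 'w (card omega) indexes blocks and 'b (card n) indexes
positions inside a block.  Block indices are numbered 0,...,omega-1 according to the
linear order on 'w.\<close>

definition blk_pos :: "'w::{finite,linorder} \<Rightarrow> nat" where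
  "blk_pos i = card {k. k < i}"

definition blk_dist :: "'w::{finite,linorder} \<Rightarrow> 'w \<Rightarrow> nat" where
  "blk_dist i j = nat \<bar>int (blk_pos i) - int (blk_pos j)\<bar>"

definition blk :: "real^('w::finite \<times> 'b::finite)^('w \<times> 'b) \<Rightarrow> 'w \<Rightarrow> 'w \<Rightarrow> real^'b^'b" where
  "blk X i j = (\<chi> k l. X $ (i,k) $ (j,l))"

definition sym_mat :: "real^'n^'n \<Rightarrow> bool" where
  "sym_mat X \<longleftrightarrow> transpose X = X"

definition pos_def_mat :: "real^'n^'n \<Rightarrow> bool" where
  "pos_def_mat X \<longleftrightarrow> sym_mat X \<and> (\<forall>x. x \<noteq> 0 \<longrightarrow> 0 < x \<bullet> (X *v x))"

definition pos_semidef_mat :: "real^'n^'n \<Rightarrow> bool" where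
  "pos_semidef_mat X \<longleftrightarrow> sym_mat X \<and> (\<forall>x. 0 \<le> x \<bullet> (X *v x))"

definition mat_spectrum :: "real^'n^'n \<Rightarrow> real set" where
  "mat_spectrum X = {c. \<exists>v. v \<noteq> 0 \<and> X *v v = c *\<^sub>R v}"

definition blk_proj :: "'w::finite set \<Rightarrow> real^('w \<times> 'b::finite) \<Rightarrow> real^('w \<times> 'b)" where
  "blk_proj S x = (\<chi> p. if fst p \<in> S then x $ p else 0)"

text \<open>Induced 2-norm of the block submatrix X_{S_R,S_C}: it equals the operator norm of
the map x \<mapsto> P_{S_R} X P_{S_C} x, since zero padding is norm preserving.\<close>
definition blk_sub_norm :: "real^('w::finite \<times> 'b::finite)^('w \<times> 'b) \<Rightarrow> 'w set \<Rightarrow> 'w set \<Rightarrow> real" where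
  "blk_sub_norm X SR SC = onorm (\<lambda>x. blk_proj SR (X *v blk_proj SC x))"

end

(* Precondition B = A + D by the block diagonal matrix G = al I + D, al = (a0 + b0)/2.
   Since D >= 0 and a0 <= A <= b0, the matrix T = G^-1 B is self-adjoint for the inner
   product x . G y, with spectrum in [1 - rho, 1 + rho], rho = (b0 - a0)/(b0 + a0).
   Hence F = T_k((I - T)/rho), T_k the Chebyshev polynomial, has G-norm at most 1, and
   F = T_k(1/rho) I + Q T with Q a polynomial of degree k - 1 in T.  Multiplying by B^-1,

     B^-1 = (F B^-1 - Q G^-1) / T_k(1/rho).

   As G^-1 is block diagonal and T has block bandwidth q/2, the block (S_R, S_C) of
   Q G^-1 vanishes as soon as (k - 1) q/2 is below the block distance d between S_R and
   S_C; the first term has norm at most 1/a0; and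
   1/T_k(1/rho) <= 2 u^k with u = (sqrt cond - 1)/(sqrt cond + 1).  Take k = ceil(2d/q). *)

theory Submission
  imports Defs
begin

lemma sym_mat_inner_commute:
  fixes M :: "real^'n^'n"
  assumes "sym_mat M"
  shows "(M *v x) \<bullet> y = x \<bullet> (M *v y)"
  using assms unfolding sym_mat_def
  by (metis dot_lmul_matrix inner_commute vector_transpose_matrix)

lemma quadratic_form_scaleR:
  fixes M :: "real^'n^'n"
  shows "(c *\<^sub>R x) \<bullet> (M *v (c *\<^sub>R x)) = c\<^sup>2 * (x \<bullet> (M *v x))"
  by (simp add: matrix_vector_mult_scaleR power2_eq_square)

lemma quadratic_form_add_scaleR:
  fixes M :: "real^'n^'n"
  assumes "sym_mat M"
  shows "(v + t *\<^sub>R w) \<bullet> (M *v (v + t *\<^sub>R w))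
           = v \<bullet> (M *v v) + 2 * t * (w \<bullet> (M *v v)) + t\<^sup>2 * (w \<bullet> (M *v w))"
proof -
  have "v \<bullet> (M *v w) = w \<bullet> (M *v v)"
    using sym_mat_inner_commute[OF assms, of v w] by (simp add: inner_commute)
  then show ?thesis
    by (simp add: matrix_vector_right_distrib matrix_vector_mult_scaleR inner_add_left
        inner_add_right power2_eq_square algebra_simps)
qed

lemma quadratic_form_orthogonal_add:
  fixes M :: "real^'n^'n"
  assumes "sym_mat M" and "y \<bullet> (M *v v) = 0" and "v \<bullet> (M *v v) = 1"
  shows "(y + a *\<^sub>R v) \<bullet> (M *v (y + a *\<^sub>R v)) = y \<bullet> (M *v y) + a\<^sup>2"
proof -
  have "v \<bullet> (M *v y) = 0"
    using assms(2) sym_mat_inner_commute[OF assms(1), of v y] by (simp add: inner_commute)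
  then show ?thesis
    using assms(3) by (simp add: quadratic_form_add_scaleR[OF assms(1)])
qed

lemma quadratic_form_shift:
  fixes D :: "real^'n^'n"
  shows "x \<bullet> ((al *\<^sub>R mat 1 + D) *v x) = al * (norm x)\<^sup>2 + x \<bullet> (D *v x)"
  by (simp add: matrix_vector_mult_add_rdistrib scaleR_matrix_vector_assoc[symmetric]
      inner_add_right power2_norm_eq_inner)

lemma continuous_on_quadratic_form: "continuous_on U (\<lambda>x::real^'n. x \<bullet> (M *v x))"
  by (intro continuous_intros linear_continuous_on bounded_linear_intros)
    (simp add: matrix_vector_mul_bounded_linear)

lemma linear_le_quadratic_imp_zero:
  fixes a b :: real
  assumes "\<And>t. 2 * t * a \<le> t\<^sup>2 * b"
  shows "a = 0"
proof (rule ccontr)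
  assume "a \<noteq> 0"
  define t where "t = a / (\<bar>b\<bar> + 1)"
  have pos: "\<bar>b\<bar> + 1 > 0" by simp
  have "2 * t * a * (\<bar>b\<bar> + 1)\<^sup>2 \<le> t\<^sup>2 * b * (\<bar>b\<bar> + 1)\<^sup>2"
    using assms[of t] by (simp add: mult_right_mono)
  moreover have "2 * t * a * (\<bar>b\<bar> + 1)\<^sup>2 = 2 * a\<^sup>2 * (\<bar>b\<bar> + 1)"
    using pos unfolding t_def by (simp add: power2_eq_square field_simps)
  moreover have "t\<^sup>2 * b * (\<bar>b\<bar> + 1)\<^sup>2 = a\<^sup>2 * b"
    using pos unfolding t_def by (simp add: power_divide)
  ultimately have "2 * a\<^sup>2 * (\<bar>b\<bar> + 1) \<le> a\<^sup>2 * b" by simp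
  moreover have "a\<^sup>2 > 0" using \<open>a \<noteq> 0\<close> by simp
  ultimately have "2 * (\<bar>b\<bar> + 1) \<le> b" by (simp add: mult.commute mult.left_commute)
  then show False by (cases "b \<ge> 0") auto
qed

lemma quadratic_form_pos_if_coercive:
  fixes M :: "real^'n^'n"
  assumes "0 < mu" and "\<And>x. mu * (norm x)\<^sup>2 \<le> x \<bullet> (M *v x)" and "x \<noteq> 0"
  shows "0 < x \<bullet> (M *v x)"
proof -
  have "0 < mu * (norm x)\<^sup>2" using assms(1,3) by simp
  then show ?thesis using assms(2)[of x] by linarith
qed

lemma coercive_quadratic_form_invertible:
  fixes M :: "real^'n^'n"
  assumes "0 < mu" and "\<And>x. mu * (norm x)\<^sup>2 \<le> x \<bullet> (M *v x)"
  shows "invertible M"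
proof -
  have "inj ((*v) M)"
  proof (rule injI)
    fix x y assume "M *v x = M *v y"
    then have "(x - y) \<bullet> (M *v (x - y)) = 0" by (simp add: matrix_vector_mult_diff_distrib)
    then show "x = y" using quadratic_form_pos_if_coercive[OF assms, of "x - y"] by auto
  qed
  then show ?thesis by (simp add: invertible_left_inverse matrix_left_invertible_injective)
qed

lemma invertible_matrix_inv:
  fixes M :: "real^'n^'n"
  assumes "invertible M"
  shows "M ** matrix_inv M = mat 1" and "matrix_inv M ** M = mat 1"
proof -
  have "\<exists>M'. M ** M' = mat 1 \<and> M' ** M = mat 1" using assms by (simp add: invertible_def)
  then have "M ** matrix_inv M = mat 1 \<and> matrix_inv M ** M = mat 1"
    unfolding matrix_inv_def by (rule someI_ex)
  then show "M ** matrix_inv M = mat 1" "matrix_inv M ** M = mat 1" by auto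
qed

lemma quadratic_form_le_norm_image:
  fixes B :: "real^'n^'n"
  assumes "0 < a" and B_pos: "a * (norm y)\<^sup>2 \<le> y \<bullet> (B *v y)"
  shows "y \<bullet> (B *v y) \<le> (norm (B *v y))\<^sup>2 / a"
proof -
  have CS: "y \<bullet> (B *v y) \<le> norm y * norm (B *v y)" by (rule norm_cauchy_schwarz)
  then have "a * norm y * norm y \<le> norm y * norm (B *v y)"
    using B_pos by (simp add: power2_eq_square mult.assoc)
  then have "a * norm y \<le> norm (B *v y)"
    by (cases "y = 0") (simp_all add: mult.commute)
  then have "norm y * norm (B *v y) \<le> (norm (B *v y))\<^sup>2 / a"
    using \<open>0 < a\<close> mult_right_mono[OF \<open>a * norm y \<le> norm (B *v y)\<close> norm_ge_zero[of "B *v y"]]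
    by (simp add: pos_le_divide_eq power2_eq_square algebra_simps)
  then show ?thesis using CS by linarith
qed

lemma quadratic_form_shift_bounds:
  fixes A D :: "real^'n^'n"
  assumes "0 \<le> rho" and A_lower: "al * (1 - rho) * (norm x)\<^sup>2 \<le> x \<bullet> (A *v x)"
    and A_upper: "x \<bullet> (A *v x) \<le> al * (1 + rho) * (norm x)\<^sup>2" and D_nonneg: "0 \<le> x \<bullet> (D *v x)"
  shows "(1 - rho) * (x \<bullet> ((al *\<^sub>R mat 1 + D) *v x)) \<le> x \<bullet> ((A + D) *v x)"
    and "x \<bullet> ((A + D) *v x) \<le> (1 + rho) * (x \<bullet> ((al *\<^sub>R mat 1 + D) *v x))"
proof -
  note G = quadratic_form_shift[of x al D]
  have B: "x \<bullet> ((A + D) *v x) = x \<bullet> (A *v x) + x \<bullet> (D *v x)"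
    by (simp add: matrix_vector_mult_add_rdistrib inner_add_right)
  show "(1 - rho) * (x \<bullet> ((al *\<^sub>R mat 1 + D) *v x)) \<le> x \<bullet> ((A + D) *v x)"
    using A_lower mult_left_mono[OF D_nonneg \<open>0 \<le> rho\<close>] unfolding G B by (simp add: algebra_simps)
  show "x \<bullet> ((A + D) *v x) \<le> (1 + rho) * (x \<bullet> ((al *\<^sub>R mat 1 + D) *v x))"
    using A_upper mult_left_mono[OF D_nonneg \<open>0 \<le> rho\<close>] unfolding G B by (simp add: algebra_simps)
qed

section \<open>Generalized eigenvectors and a spectral bound\<close>

lemma rayleigh_quotient_attains_max:
  fixes G B :: "real^'n^'n"
  assumes "0 < mu" and G_pos: "\<And>x. mu * (norm x)\<^sup>2 \<le> x \<bullet> (G *v x)"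
    and S: "subspace S" and "x0 \<in> S" "x0 \<noteq> 0"
  shows "\<exists>v\<in>S. v \<bullet> (G *v v) = 1 \<and>
           (\<forall>x\<in>S. x \<bullet> (B *v x) \<le> (v \<bullet> (B *v v)) * (x \<bullet> (G *v x)))"
proof -
  have G_normalize: "c *\<^sub>R x \<in> S \<and> (c *\<^sub>R x) \<bullet> (G *v (c *\<^sub>R x)) = 1"
    if "x \<in> S" "c = 1 / sqrt (x \<bullet> (G *v x))" and "0 < x \<bullet> (G *v x)" for x c
  proof -
    have "c\<^sup>2 * (x \<bullet> (G *v x)) = 1" using that by (simp add: power_divide)
    then show ?thesis using that S by (simp only: quadratic_form_scaleR subspace_scale)
  qed
  note G_strict = quadratic_form_pos_if_coercive[OF \<open>0 < mu\<close> G_pos]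
  define K where "K = S \<inter> {x. x \<bullet> (G *v x) = 1}"
  have "K \<subseteq> cball 0 (sqrt (1 / mu))"
  proof
    fix x assume "x \<in> K"
    then have "(norm x)\<^sup>2 \<le> 1 / mu"
      using G_pos[of x] \<open>0 < mu\<close> by (simp add: K_def field_simps)
    then show "x \<in> cball 0 (sqrt (1 / mu))" by (simp add: real_le_rsqrt)
  qed
  moreover have "closed K"
    unfolding K_def
    by (intro closed_Int closed_subspace S closed_Collect_eq continuous_on_quadratic_form
        continuous_on_const)
  ultimately have "compact K"
    by (meson bounded_cball bounded_subset compact_eq_bounded_closed)
  moreover have "K \<noteq> {}"
    using G_normalize[OF \<open>x0 \<in> S\<close> refl G_strict[OF \<open>x0 \<noteq> 0\<close>]] by (auto simp: K_def)
  ultimately obtain v where "v \<in> K" and v_max: "\<And>x. x \<in> K \<Longrightarrow> x \<bullet> (B *v x) \<le> v \<bullet> (B *v v)"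
    using continuous_attains_sup[OF \<open>compact K\<close> \<open>K \<noteq> {}\<close> continuous_on_quadratic_form[of K B]]
    by blast
  have "x \<bullet> (B *v x) \<le> (v \<bullet> (B *v v)) * (x \<bullet> (G *v x))" if "x \<in> S" for x
  proof (cases "x = 0")
    case False
    define c where "c = 1 / sqrt (x \<bullet> (G *v x))"
    have "c *\<^sub>R x \<in> K"
      using G_normalize[OF that c_def G_strict[OF False]] by (simp add: K_def)
    then have "c\<^sup>2 * (x \<bullet> (B *v x)) \<le> v \<bullet> (B *v v)"
      using v_max[of "c *\<^sub>R x"] by (simp only: quadratic_form_scaleR)
    moreover have "c\<^sup>2 = 1 / (x \<bullet> (G *v x))"
      using G_strict[OF False] by (simp add: c_def power_divide)
    ultimately show ?thesis
      using G_strict[OF False] by (simp add: pos_divide_le_eq)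
  qed simp
  then show ?thesis using \<open>v \<in> K\<close> by (auto simp: K_def)
qed

lemma rayleigh_quotient_max_eigenvector:
  fixes G B T :: "real^'n^'n"
  assumes symG: "sym_mat G" and symB: "sym_mat B" and GT: "G ** T = B"
    and "0 < mu" and G_pos: "\<And>x. mu * (norm x)\<^sup>2 \<le> x \<bullet> (G *v x)"
    and S: "subspace S" and T_inv: "\<And>x. x \<in> S \<Longrightarrow> T *v x \<in> S"
    and "v \<in> S" and vG: "v \<bullet> (G *v v) = 1"
    and v_max: "\<And>x. x \<in> S \<Longrightarrow> x \<bullet> (B *v x) \<le> (v \<bullet> (B *v v)) * (x \<bullet> (G *v x))"
  shows "T *v v = (v \<bullet> (B *v v)) *\<^sub>R v"
proof -
  define l where "l = v \<bullet> (B *v v)"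
  have GTx: "G *v (T *v x) = B *v x" for x
    by (simp add: matrix_vector_mul_assoc GT)
  \<comment> \<open>First variation of the Rayleigh quotient at its maximum\<close>
  have B_orth: "w \<bullet> (B *v v) = 0" if "w \<in> S" and "w \<bullet> (G *v v) = 0" for w
  proof (rule linear_le_quadratic_imp_zero)
    fix t :: real
    have "v + t *\<^sub>R w \<in> S" using S \<open>v \<in> S\<close> \<open>w \<in> S\<close> by (simp add: subspace_add subspace_scale)
    from v_max[OF this] show "2 * t * (w \<bullet> (B *v v)) \<le> t\<^sup>2 * (l * (w \<bullet> (G *v w)) - w \<bullet> (B *v w))"
      unfolding quadratic_form_add_scaleR[OF symB] quadratic_form_add_scaleR[OF symG]
        \<open>w \<bullet> (G *v v) = 0\<close> vG l_def[symmetric]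
      by (simp add: algebra_simps)
  qed
  define u where "u = T *v v - l *\<^sub>R v"
  have "u \<in> S" unfolding u_def using S \<open>v \<in> S\<close> T_inv by (simp add: subspace_diff subspace_scale)
  have "u \<bullet> (G *v v) = (T *v v) \<bullet> (G *v v) - l * (v \<bullet> (G *v v))"
    by (simp add: u_def inner_diff_left)
  also have "\<dots> = 0"
    using vG by (metis GTx l_def mult_1_right symB symG sym_mat_inner_commute diff_self)
  finally have uGv: "u \<bullet> (G *v v) = 0" .
  have "u \<bullet> (G *v u) = u \<bullet> (B *v v) - l * (u \<bullet> (G *v v))"
    by (simp add: u_def matrix_vector_mult_diff_distrib matrix_vector_mult_scaleR inner_diff_right GTx)
  also have "\<dots> = 0" using B_orth[OF \<open>u \<in> S\<close> uGv] uGv by simp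
  finally have "mu * (norm u)\<^sup>2 \<le> 0" using G_pos[of u] by simp
  then have "u = 0" using \<open>0 < mu\<close> by (simp add: mult_le_0_iff)
  then show ?thesis by (simp add: u_def l_def)
qed

lemma generalized_eigenvector_max:
  fixes G B T :: "real^'n^'n"
  assumes symG: "sym_mat G" and symB: "sym_mat B" and GT: "G ** T = B"
    and "0 < mu" and G_pos: "\<And>x. mu * (norm x)\<^sup>2 \<le> x \<bullet> (G *v x)"
    and S: "subspace S" and T_inv: "\<And>x. x \<in> S \<Longrightarrow> T *v x \<in> S"
    and "x0 \<in> S" "x0 \<noteq> 0"
  obtains v l where "v \<in> S" "v \<bullet> (G *v v) = 1" "T *v v = l *\<^sub>R v"
    "\<And>x. x \<in> S \<Longrightarrow> x \<bullet> (B *v x) \<le> l * (x \<bullet> (G *v x))"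
  using rayleigh_quotient_attains_max[OF \<open>0 < mu\<close> G_pos S \<open>x0 \<in> S\<close> \<open>x0 \<noteq> 0\<close>, of B]
    rayleigh_quotient_max_eigenvector[OF symG symB GT \<open>0 < mu\<close> G_pos S T_inv]
  by metis

lemma G_orthogonal_complement_eigenvector:
  fixes G B T :: "real^'n^'n"
  assumes symG: "sym_mat G" and symB: "sym_mat B" and GT: "G ** T = B"
    and S: "subspace S" and T_inv: "\<And>x. x \<in> S \<Longrightarrow> T *v x \<in> S"
    and "v \<in> S" and vG: "v \<bullet> (G *v v) = 1" and Tv: "T *v v = l *\<^sub>R v"
  defines "S' \<equiv> {y \<in> S. y \<bullet> (G *v v) = 0}"
  shows "subspace S'" and "\<And>y. y \<in> S' \<Longrightarrow> T *v y \<in> S'" and "dim S' < dim S"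
proof -
  show S': "subspace S'"
    using S unfolding S'_def subspace_def by (auto simp: inner_add_left)
  have GTx: "G *v (T *v x) = B *v x" for x
    by (simp add: matrix_vector_mul_assoc GT)
  show "T *v y \<in> S'" if "y \<in> S'" for y
  proof -
    have "(T *v y) \<bullet> (G *v v) = y \<bullet> (B *v v)"
      by (metis GTx symB symG sym_mat_inner_commute)
    also have "\<dots> = l * (y \<bullet> (G *v v))"
      by (metis GTx Tv inner_scaleR_right matrix_vector_mult_scaleR)
    finally show ?thesis using that S T_inv by (simp add: S'_def)
  qed
  have "S' \<subseteq> S" "v \<notin> S'" using vG by (auto simp: S'_def)
  then have "S' \<subset> S" using \<open>v \<in> S\<close> by blast
  then have "span S' \<subset> span S" using S S' by (simp add: span_eq_iff[THEN iffD2])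
  then show "dim S' < dim S" by (rule dim_psubset)
qed

lemma G_quadratic_form_le_add_eigenvector:
  fixes G F :: "real^'n^'n"
  assumes symG: "sym_mat G" and vG: "v \<bullet> (G *v v) = 1" and Fv: "F *v v = p *\<^sub>R v"
    and "p\<^sup>2 \<le> c\<^sup>2" and "y \<bullet> (G *v v) = 0" and "(F *v y) \<bullet> (G *v v) = 0"
    and y_le: "(F *v y) \<bullet> (G *v (F *v y)) \<le> c\<^sup>2 * (y \<bullet> (G *v y))"
  shows "(F *v (y + a *\<^sub>R v)) \<bullet> (G *v (F *v (y + a *\<^sub>R v)))
           \<le> c\<^sup>2 * ((y + a *\<^sub>R v) \<bullet> (G *v (y + a *\<^sub>R v)))"
proof -
  have "F *v (y + a *\<^sub>R v) = F *v y + (a * p) *\<^sub>R v"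
    by (simp add: matrix_vector_right_distrib matrix_vector_mult_scaleR Fv)
  then have "(F *v (y + a *\<^sub>R v)) \<bullet> (G *v (F *v (y + a *\<^sub>R v)))
      = (F *v y) \<bullet> (G *v (F *v y)) + a\<^sup>2 * p\<^sup>2"
    using quadratic_form_orthogonal_add[OF symG _ vG] assms(6) by (simp add: power_mult_distrib)
  also have "\<dots> \<le> c\<^sup>2 * (y \<bullet> (G *v y)) + a\<^sup>2 * c\<^sup>2"
    using y_le \<open>p\<^sup>2 \<le> c\<^sup>2\<close> by (simp add: add_mono mult_left_mono)
  also have "\<dots> = c\<^sup>2 * ((y + a *\<^sub>R v) \<bullet> (G *v (y + a *\<^sub>R v)))"
    using quadratic_form_orthogonal_add[OF symG assms(5) vG] by (simp add: algebra_simps)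
  finally show ?thesis .
qed

text \<open>Here \<open>T\<close> is self-adjoint for the inner product \<open>x \<bullet> (G *v y)\<close>, and \<open>F\<close> acts like a
  function \<open>phi\<close> of \<open>T\<close>; the bound follows by splitting off one \<open>G\<close>-normalised eigenvector
  of \<open>T\<close> at a time.\<close>

lemma G_quadratic_form_le_by_eigenvalues:
  fixes G B T F :: "real^'n^'n"
  assumes symG: "sym_mat G" and symB: "sym_mat B" and GT: "G ** T = B"
    and "0 < mu" and G_pos: "\<And>x. mu * (norm x)\<^sup>2 \<le> x \<bullet> (G *v x)"
    and B_lower: "\<And>x. m * (x \<bullet> (G *v x)) \<le> x \<bullet> (B *v x)"
    and B_upper: "\<And>x. x \<bullet> (B *v x) \<le> M * (x \<bullet> (G *v x))"
    and F_inv: "\<And>S x. subspace S \<Longrightarrow> (\<And>y. y \<in> S \<Longrightarrow> T *v y \<in> S) \<Longrightarrow> x \<in> S \<Longrightarrow> F *v x \<in> S"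
    and F_eig: "\<And>v l. T *v v = l *\<^sub>R v \<Longrightarrow> F *v v = phi l *\<^sub>R v"
    and phi_le: "\<And>l. m \<le> l \<Longrightarrow> l \<le> M \<Longrightarrow> \<bar>phi l\<bar> \<le> c"
  shows "(F *v x) \<bullet> (G *v (F *v x)) \<le> c\<^sup>2 * (x \<bullet> (G *v x))"
proof -
  have "(F *v x) \<bullet> (G *v (F *v x)) \<le> c\<^sup>2 * (x \<bullet> (G *v x))"
    if "subspace S" "\<And>y. y \<in> S \<Longrightarrow> T *v y \<in> S" "x \<in> S" for S x
    using that
  proof (induction "dim S" arbitrary: S x rule: less_induct)
    case less
    note S = less.prems(1) and T_inv = less.prems(2)
    show ?case
    proof (cases "S \<subseteq> {0}")
      case True
      then show ?thesis using \<open>x \<in> S\<close> by auto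
    next
      case False
      then obtain x0 where "x0 \<in> S" "x0 \<noteq> 0" by blast
      then obtain v l where "v \<in> S" and vG: "v \<bullet> (G *v v) = 1" and Tv: "T *v v = l *\<^sub>R v"
        using generalized_eigenvector_max[OF symG symB GT \<open>0 < mu\<close> G_pos S T_inv] by metis
      have "v \<bullet> (B *v v) = l"
        using vG by (metis GT Tv matrix_vector_mul_assoc matrix_vector_mult_scaleR inner_scaleR_right mult_1_right)
      then have "\<bar>phi l\<bar> \<le> c" using phi_le B_lower[of v] B_upper[of v] vG by simp
      then have phi_sq: "(phi l)\<^sup>2 \<le> c\<^sup>2" by (metis abs_ge_zero power2_abs power_mono)
      define S' where "S' = {y \<in> S. y \<bullet> (G *v v) = 0}"
      note S' = G_orthogonal_complement_eigenvector[OF symG symB GT S T_inv \<open>v \<in> S\<close> vG Tv,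
          folded S'_def]
      define a where "a = x \<bullet> (G *v v)"
      define x' where "x' = x - a *\<^sub>R v"
      have "x' \<in> S'"
        using S \<open>x \<in> S\<close> \<open>v \<in> S\<close> vG
        by (simp add: S'_def x'_def a_def subspace_diff subspace_scale inner_diff_left)
      moreover have "F *v x' \<in> S'" using F_inv[OF S'(1) S'(2) \<open>x' \<in> S'\<close>] .
      ultimately have "(F *v (x' + a *\<^sub>R v)) \<bullet> (G *v (F *v (x' + a *\<^sub>R v)))
          \<le> c\<^sup>2 * ((x' + a *\<^sub>R v) \<bullet> (G *v (x' + a *\<^sub>R v)))"
        using G_quadratic_form_le_add_eigenvector[OF symG vG F_eig[OF Tv] phi_sq]
          less.hyps[OF S'(3) S'(1) S'(2)] by (simp add: S'_def)
      then show ?thesis by (simp add: x'_def)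
    qed
  qed
  then show ?thesis using subspace_UNIV by blast
qed

lemma sym_mat_eigenvectors_orthogonal:
  fixes A :: "real^'n^'n"
  assumes "sym_mat A" "A *v v = l *\<^sub>R v" "A *v w = m *\<^sub>R w" "l \<noteq> m"
  shows "v \<bullet> w = 0"
proof -
  have "l * (v \<bullet> w) = (A *v v) \<bullet> w" using assms by simp
  also have "\<dots> = v \<bullet> (A *v w)" by (rule sym_mat_inner_commute[OF assms(1)])
  also have "\<dots> = m * (v \<bullet> w)" using assms by simp
  finally show ?thesis using assms(4) by simp
qed

lemma finite_mat_spectrum:
  fixes A :: "real^'n^'n"
  assumes "sym_mat A"
  shows "finite (mat_spectrum A)"
proof -
  define f where "f l = (SOME v. v \<noteq> 0 \<and> A *v v = l *\<^sub>R v)" for l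
  have f: "f l \<noteq> 0 \<and> A *v f l = l *\<^sub>R f l" if "l \<in> mat_spectrum A" for l
    using that unfolding f_def mat_spectrum_def by (rule CollectE) (rule someI_ex)
  have "inj_on f (mat_spectrum A)"
    using f sym_mat_eigenvectors_orthogonal[OF assms] by (metis inj_onI inner_eq_zero_iff)
  moreover have "pairwise orthogonal (f ` mat_spectrum A)"
    using f sym_mat_eigenvectors_orthogonal[OF assms]
    unfolding pairwise_def orthogonal_def by blast
  then have "independent (f ` mat_spectrum A)"
    using f by (intro pairwise_orthogonal_independent) auto
  then have "finite (f ` mat_spectrum A)" by (rule independent_imp_finite)
  ultimately show ?thesis by (rule finite_imageD[rotated])
qed

lemma sym_mat_quadratic_form_le_eigenvalue:
  fixes A :: "real^'n^'n"
  assumes "sym_mat A"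
  shows "\<exists>l\<in>mat_spectrum A. \<forall>x. x \<bullet> (A *v x) \<le> l * (norm x)\<^sup>2"
proof -
  have "(vec 1 :: real^'n) \<noteq> 0" by (simp add: vec_eq_iff)
  moreover have "sym_mat (mat 1 :: real^'n^'n)" by (simp add: sym_mat_def transpose_mat)
  ultimately obtain v l where "v \<bullet> (mat 1 *v v) = 1" "A *v v = l *\<^sub>R v"
    and l_max: "\<And>x. x \<bullet> (A *v x) \<le> l * (x \<bullet> (mat 1 *v x))"
    using generalized_eigenvector_max[of "mat 1" A A 1 UNIV] assms
    by (auto simp: power2_norm_eq_inner)
  moreover have "v \<noteq> 0" using \<open>v \<bullet> (mat 1 *v v) = 1\<close> by auto
  ultimately have "l \<in> mat_spectrum A" by (auto simp: mat_spectrum_def)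
  then show ?thesis
    using l_max by (auto simp: power2_norm_eq_inner)
qed

lemma sym_mat_quadratic_form_ge_eigenvalue:
  fixes A :: "real^'n^'n"
  assumes "sym_mat A"
  shows "\<exists>l\<in>mat_spectrum A. \<forall>x. l * (norm x)\<^sup>2 \<le> x \<bullet> (A *v x)"
proof -
  have neg: "(- A) *v x = - (A *v x)" for x
    by (simp add: matrix_vector_mult_def vec_eq_iff sum_negf)
  have "sym_mat (- A)" using assms by (simp add: sym_mat_def transpose_def vec_eq_iff)
  then obtain l where l: "l \<in> mat_spectrum (- A)" and "\<forall>x. x \<bullet> ((- A) *v x) \<le> l * (norm x)\<^sup>2"
    using sym_mat_quadratic_form_le_eigenvalue by blast
  then have "\<forall>x. (- l) * (norm x)\<^sup>2 \<le> x \<bullet> (A *v x)" by (simp add: neg minus_le_iff)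
  moreover have "- l \<in> mat_spectrum A"
  proof -
    obtain v where "v \<noteq> 0" "(- A) *v v = l *\<^sub>R v" using l by (auto simp: mat_spectrum_def)
    then have "A *v v = (- l) *\<^sub>R v" by (metis neg minus_minus scaleR_minus_left)
    then show ?thesis using \<open>v \<noteq> 0\<close> by (auto simp: mat_spectrum_def)
  qed
  ultimately show ?thesis by blast
qed

lemma quadratic_form_spectrum_bounds:
  fixes A :: "real^'n^'n"
  assumes "sym_mat A"
  shows "Min (mat_spectrum A) * (norm x)\<^sup>2 \<le> x \<bullet> (A *v x)"
    and "x \<bullet> (A *v x) \<le> Max (mat_spectrum A) * (norm x)\<^sup>2"
proof -
  note fin = finite_mat_spectrum[OF assms]
  obtain l where "l \<in> mat_spectrum A" "l * (norm x)\<^sup>2 \<le> x \<bullet> (A *v x)"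
    using sym_mat_quadratic_form_ge_eigenvalue[OF assms] by blast
  moreover have "Min (mat_spectrum A) \<le> l" using fin \<open>l \<in> mat_spectrum A\<close> by simp
  ultimately show "Min (mat_spectrum A) * (norm x)\<^sup>2 \<le> x \<bullet> (A *v x)"
    by (meson mult_right_mono order_trans zero_le_power2)
  obtain l' where "l' \<in> mat_spectrum A" "x \<bullet> (A *v x) \<le> l' * (norm x)\<^sup>2"
    using sym_mat_quadratic_form_le_eigenvalue[OF assms] by blast
  moreover have "l' \<le> Max (mat_spectrum A)" using fin \<open>l' \<in> mat_spectrum A\<close> by simp
  ultimately show "x \<bullet> (A *v x) \<le> Max (mat_spectrum A) * (norm x)\<^sup>2"
    by (meson mult_right_mono order_trans zero_le_power2)
qed

section \<open>Block banded matrices\<close>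

definition blk_banded :: "real^('w::{finite,linorder} \<times> 'b::finite)^('w \<times> 'b) \<Rightarrow> nat \<Rightarrow> bool" where
  "blk_banded X h \<longleftrightarrow> (\<forall>p p'. h < blk_dist (fst p) (fst p') \<longrightarrow> X $ p $ p' = 0)"

lemma blk_bandedD: "blk_banded X h \<Longrightarrow> h < blk_dist (fst p) (fst p') \<Longrightarrow> X $ p $ p' = 0"
  unfolding blk_banded_def by blast

lemma blk_banded_iff_blk: "blk_banded X h \<longleftrightarrow> (\<forall>i j. h < blk_dist i j \<longrightarrow> blk X i j = 0)"
  by (auto simp: blk_banded_def blk_def vec_eq_iff)

lemma blk_dist_triangle: "blk_dist i j \<le> blk_dist i k + blk_dist k j"
  unfolding blk_dist_def by linarith

lemma blk_dist_self [simp]: "blk_dist i i = 0"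
  unfolding blk_dist_def by simp

lemma blk_pos_strict_mono: "i < j \<Longrightarrow> blk_pos i < blk_pos j"
  unfolding blk_pos_def by (rule psubset_card_mono) auto

lemma blk_dist_eq_0_iff [simp]: "blk_dist i j = 0 \<longleftrightarrow> i = j"
  using blk_pos_strict_mono[of i j] blk_pos_strict_mono[of j i]
  by (cases i j rule: linorder_cases) (auto simp: blk_dist_def)

lemma zero_less_blk_dist_iff [simp]: "0 < blk_dist i j \<longleftrightarrow> i \<noteq> j"
  by (metis blk_dist_eq_0_iff neq0_conv)

lemma blk_banded_mono: "blk_banded X h \<Longrightarrow> h \<le> h' \<Longrightarrow> blk_banded X h'"
  unfolding blk_banded_def by auto

lemma blk_banded_zero [simp]: "blk_banded 0 h"
  unfolding blk_banded_def by simp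

lemma blk_banded_mat [simp]: "blk_banded (mat c) h"
  unfolding blk_banded_def by (auto simp: mat_def)

lemma blk_banded_add: "blk_banded X h \<Longrightarrow> blk_banded Y h \<Longrightarrow> blk_banded (X + Y) h"
  unfolding blk_banded_def by simp

lemma blk_banded_diff: "blk_banded X h \<Longrightarrow> blk_banded Y h \<Longrightarrow> blk_banded (X - Y) h"
  unfolding blk_banded_def by simp

lemma blk_banded_scaleR: "blk_banded X h \<Longrightarrow> blk_banded (c *\<^sub>R X) h"
  unfolding blk_banded_def by simp

lemma blk_banded_uminus: "blk_banded X h \<Longrightarrow> blk_banded (- X) h"
  unfolding blk_banded_def by simp

lemma blk_banded_mult:
  assumes "blk_banded X h" "blk_banded Y h'"
  shows "blk_banded (X ** Y) (h + h')"
  unfolding blk_banded_def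
proof (intro allI impI)
  fix p p' :: "'a \<times> 'b"
  assume far: "h + h' < blk_dist (fst p) (fst p')"
  have "h < blk_dist (fst p) (fst r) \<or> h' < blk_dist (fst r) (fst p')" for r :: "'a \<times> 'b"
    using blk_dist_triangle[of "fst p" "fst p'" "fst r"] far by linarith
  with assms have "X $ p $ r * Y $ r $ p' = 0" for r
    unfolding blk_banded_def by (metis mult_eq_0_iff)
  then have "(\<Sum>r\<in>UNIV. X $ p $ r * Y $ r $ p') = 0" by (intro sum.neutral) blast
  then show "(X ** Y) $ p $ p' = 0" by (simp add: matrix_matrix_mult_def)
qed

lemma blk_proj_zero [simp]: "blk_proj S 0 = 0"
  by (simp add: blk_proj_def vec_eq_iff)

lemma blk_proj_diff: "blk_proj S (x - y) = blk_proj S x - blk_proj S y"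
  by (simp add: blk_proj_def vec_eq_iff)

lemma blk_proj_scaleR: "blk_proj S (c *\<^sub>R x) = c *\<^sub>R blk_proj S x"
  by (simp add: blk_proj_def vec_eq_iff)

lemma norm_blk_proj_le: "norm (blk_proj S x) \<le> norm x"
  by (rule norm_le_componentwise_cart) (simp add: blk_proj_def)

lemma blk_proj_banded_vanish:
  assumes "blk_banded Z h" and far: "\<And>i j. i \<in> SR \<Longrightarrow> j \<in> SC \<Longrightarrow> h < blk_dist i j"
  shows "blk_proj SR (Z *v blk_proj SC x) = 0"
proof -
  have "(Z *v blk_proj SC x) $ p = 0" if "fst p \<in> SR" for p
  proof -
    have "Z $ p $ p' * blk_proj SC x $ p' = 0" for p'
      using blk_bandedD[OF assms(1)] far[OF that, of "fst p'"] by (auto simp: blk_proj_def)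
    then show ?thesis unfolding matrix_vector_mult_def vec_lambda_beta by (simp add: sum.neutral)
  qed
  then show ?thesis by (auto simp: blk_proj_def vec_eq_iff)
qed

lemma blk_banded_0_iff_commute_blk_proj:
  "blk_banded X 0 \<longleftrightarrow> (\<forall>S x. X *v blk_proj S x = blk_proj S (X *v x))"
proof
  assume "blk_banded X 0"
  then have off_diag: "X $ p $ p' = 0" if "fst p \<noteq> fst p'" for p p'
    using blk_bandedD[OF \<open>blk_banded X 0\<close>] that by simp
  have termwise: "X $ p $ p' * (if fst p' \<in> S then x $ p' else 0)
      = (if fst p \<in> S then X $ p $ p' * x $ p' else 0)" for S x p and p' :: "'a \<times> 'b"
    using off_diag[of p p'] by (cases "fst p = fst p'") auto
  have "(X *v blk_proj S x) $ p = blk_proj S (X *v x) $ p" for S x p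
    unfolding matrix_vector_mult_def blk_proj_def vec_lambda_beta termwise by simp
  then show "\<forall>S x. X *v blk_proj S x = blk_proj S (X *v x)"
    by (simp add: vec_eq_iff)
next
  assume commute: "\<forall>S x. X *v blk_proj S x = blk_proj S (X *v x)"
  show "blk_banded X 0" unfolding blk_banded_def
  proof (intro allI impI)
    fix p p' :: "'a \<times> 'b"
    assume "0 < blk_dist (fst p) (fst p')"
    then have "fst p \<noteq> fst p'" by simp
    define e :: "real^('a \<times> 'b)" where "e = (\<chi> r. if r = p' then 1 else 0)"
    have "X $ p $ p' = (X *v e) $ p" by (simp add: e_def matrix_vector_mult_def if_distrib cong: if_cong)
    also have "\<dots> = (X *v blk_proj {fst p'} e) $ p"
      by (rule arg_cong[where f = "\<lambda>y. (X *v y) $ p"]) (auto simp: e_def blk_proj_def vec_eq_iff)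
    also have "\<dots> = 0"
      using commute[rule_format, of "{fst p'}" e] \<open>fst p \<noteq> fst p'\<close>
      by (simp add: blk_proj_def)
    finally show "X $ p $ p' = 0" .
  qed
qed

lemma blk_banded_0_matrix_inv:
  fixes G :: "real^('w::{finite,linorder} \<times> 'b::finite)^('w \<times> 'b)"
  assumes G: "invertible G" and "blk_banded G 0"
  shows "blk_banded (matrix_inv G) 0"
proof -
  have G_commute: "G *v blk_proj S y = blk_proj S (G *v y)" for S y
    using assms(2) by (simp add: blk_banded_0_iff_commute_blk_proj)
  have "matrix_inv G *v blk_proj S x = blk_proj S (matrix_inv G *v x)" for S x
  proof -
    have "matrix_inv G *v blk_proj S x = matrix_inv G *v blk_proj S (G *v (matrix_inv G *v x))"
      by (simp add: matrix_vector_mul_assoc invertible_matrix_inv[OF G])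
    also have "\<dots> = matrix_inv G *v (G *v blk_proj S (matrix_inv G *v x))"
      by (simp only: G_commute)
    also have "\<dots> = blk_proj S (matrix_inv G *v x)"
      by (simp add: matrix_vector_mul_assoc invertible_matrix_inv[OF G])
    finally show ?thesis .
  qed
  then show ?thesis by (simp add: blk_banded_0_iff_commute_blk_proj)
qed

lemma sym_mat_blk_diag:
  assumes "blk_banded D 0" and "\<And>i. sym_mat (blk D i i)"
  shows "sym_mat D"
proof -
  have "D $ p' $ p = D $ p $ p'" for p p'
  proof (cases "fst p = fst p'")
    case True
    then obtain i a b where "p = (i, a)" "p' = (i, b)" by (metis prod.collapse)
    then show ?thesis
      using arg_cong[where f = "\<lambda>M. M $ a $ b", OF assms(2)[of i, unfolded sym_mat_def]]
      by (simp add: transpose_def blk_def)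
  next
    case False
    then show ?thesis using blk_bandedD[OF assms(1), of p p'] blk_bandedD[OF assms(1), of p' p] by simp
  qed
  then show ?thesis by (simp add: sym_mat_def transpose_def vec_eq_iff)
qed

lemma quadratic_form_blk_diag:
  fixes D :: "real^('w::{finite,linorder} \<times> 'b::finite)^('w \<times> 'b)"
  assumes "blk_banded D 0"
  shows "x \<bullet> (D *v x) = (\<Sum>i\<in>UNIV. (\<chi> a. x $ (i, a)) \<bullet> (blk D i i *v (\<chi> a. x $ (i, a))))"
proof -
  have pair_sum: "(\<Sum>p\<in>UNIV. f p) = (\<Sum>i\<in>UNIV. \<Sum>a\<in>UNIV. f (i, a))" for f :: "'w \<times> 'b \<Rightarrow> real"
    by (simp add: sum.cartesian_product)
  have off_diag: "D $ (i, a) $ (j, b) = 0" if "j \<noteq> i" for i j a b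
    using blk_bandedD[OF assms, of "(i, a)" "(j, b)"] that by simp
  have "x \<bullet> (D *v x) = (\<Sum>p\<in>UNIV. \<Sum>p'\<in>UNIV. x $ p * D $ p $ p' * x $ p')"
    by (simp add: inner_vec_def matrix_vector_mult_def sum_distrib_left mult.assoc)
  also have "\<dots> = (\<Sum>i\<in>UNIV. \<Sum>a\<in>UNIV. \<Sum>j\<in>UNIV. \<Sum>b\<in>UNIV. x $ (i, a) * D $ (i, a) $ (j, b) * x $ (j, b))"
    by (simp only: pair_sum)
  also have "\<dots> = (\<Sum>i\<in>UNIV. \<Sum>a\<in>UNIV. \<Sum>b\<in>UNIV. x $ (i, a) * D $ (i, a) $ (i, b) * x $ (i, b))"
  proof (intro sum.cong refl)
    fix i a
    have "(\<Sum>j\<in>UNIV. \<Sum>b\<in>UNIV. x $ (i, a) * D $ (i, a) $ (j, b) * x $ (j, b))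
        = (\<Sum>j\<in>UNIV. if j = i then \<Sum>b\<in>UNIV. x $ (i, a) * D $ (i, a) $ (i, b) * x $ (i, b) else 0)"
      by (rule sum.cong) (auto simp: off_diag)
    then show "(\<Sum>j\<in>UNIV. \<Sum>b\<in>UNIV. x $ (i, a) * D $ (i, a) $ (j, b) * x $ (j, b))
        = (\<Sum>b\<in>UNIV. x $ (i, a) * D $ (i, a) $ (i, b) * x $ (i, b))" by simp
  qed
  also have "\<dots> = (\<Sum>i\<in>UNIV. (\<chi> a. x $ (i, a)) \<bullet> (blk D i i *v (\<chi> a. x $ (i, a))))"
    by (simp add: inner_vec_def matrix_vector_mult_def blk_def sum_distrib_left mult.assoc)
  finally show ?thesis .
qed

lemma pos_semidef_blk_diag:
  assumes "blk_banded D 0" and "\<And>i. pos_semidef_mat (blk D i i)"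
  shows "pos_semidef_mat D"
proof -
  have "sym_mat D"
    using assms(2) by (intro sym_mat_blk_diag[OF assms(1)]) (simp add: pos_semidef_mat_def)
  moreover have "0 \<le> x \<bullet> (D *v x)" for x
    unfolding quadratic_form_blk_diag[OF assms(1)]
    using assms(2) by (intro sum_nonneg) (simp add: pos_semidef_mat_def)
  ultimately show ?thesis by (simp add: pos_semidef_mat_def)
qed

lemma blk_diag_shift_preconditioner:
  fixes D :: "real^('w::{finite,linorder} \<times> 'b::finite)^('w \<times> 'b)"
  assumes D_psd: "pos_semidef_mat D" and D_band: "blk_banded D 0" and "0 < al"
  defines "G \<equiv> al *\<^sub>R mat 1 + D"
  shows "sym_mat G" and "\<And>x. al * (norm x)\<^sup>2 \<le> x \<bullet> (G *v x)"
    and "G ** matrix_inv G = mat 1" and "blk_banded (matrix_inv G) 0"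
proof -
  show "sym_mat G"
    using D_psd by (simp add: G_def pos_semidef_mat_def sym_mat_def transpose_def vec_eq_iff mat_def)
  show G_pos: "al * (norm x)\<^sup>2 \<le> x \<bullet> (G *v x)" for x
    using D_psd by (simp add: G_def quadratic_form_shift pos_semidef_mat_def)
  have "invertible G" using \<open>0 < al\<close> G_pos by (rule coercive_quadratic_form_invertible)
  then show "G ** matrix_inv G = mat 1" by (rule invertible_matrix_inv)
  show "blk_banded (matrix_inv G) 0"
    using \<open>invertible G\<close> D_band
    by (intro blk_banded_0_matrix_inv) (simp_all add: G_def blk_banded_add blk_banded_scaleR)
qed

section \<open>Chebyshev polynomials\<close>

fun chebyshev :: "nat \<Rightarrow> real \<Rightarrow> real" where
  "chebyshev 0 z = 1"
| "chebyshev (Suc 0) z = z"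
| "chebyshev (Suc (Suc k)) z = 2 * z * chebyshev (Suc k) z - chebyshev k z"

lemma chebyshev_cos: "chebyshev k (cos t) = cos (real k * t)"
proof (induction k rule: induct_nat_012)
  case (ge2 k)
  have "cos (real (Suc (Suc k)) * t) = cos (real (Suc k) * t + t)"
    and "cos (real k * t) = cos (real (Suc k) * t - t)"
    by (simp_all add: algebra_simps)
  then show ?case using ge2 by (simp add: cos_add cos_diff)
qed simp_all

lemma abs_chebyshev_le_1: "\<bar>z\<bar> \<le> 1 \<Longrightarrow> \<bar>chebyshev k z\<bar> \<le> 1"
  using chebyshev_cos[of k "arccos z"] cos_arccos[of z] by (simp add: abs_le_iff)

lemma chebyshev_joukowski:
  assumes "w * u = 1"
  shows "chebyshev k ((w + u) / 2) = (w ^ k + u ^ k) / 2"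
proof (induction k rule: induct_nat_012)
  case (ge2 k)
  have "(w + u) * (w ^ Suc k + u ^ Suc k) = w ^ Suc (Suc k) + u ^ Suc (Suc k) + (w * u) * (w ^ k + u ^ k)"
    by (simp add: algebra_simps)
  moreover have uw: "u * (w * x) = x" for x
    using assms by (metis mult.assoc mult.commute mult_1)
  ultimately show ?case using ge2 by (simp add: field_simps uw)
qed simp_all

lemma chebyshev_condition_number_bound:
  fixes a b :: real
  assumes "0 < a" "a < b"
  defines "u \<equiv> (sqrt (b / a) - 1) / (sqrt (b / a) + 1)"
  shows "0 < chebyshev k ((a + b) / (b - a))"
    and "1 / chebyshev k ((a + b) / (b - a)) \<le> 2 * u ^ k"
proof -
  define s where "s = sqrt (b / a)"
  have "1 < s" using assms by (simp add: s_def)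
  have s2: "s\<^sup>2 = b / a" using assms by (simp add: s_def)
  define w where "w = (s + 1) / (s - 1)"
  have "0 < u" "0 < w" using \<open>1 < s\<close> by (simp_all add: u_def w_def s_def[symmetric])
  have wu: "w * u = 1" using \<open>1 < s\<close> by (simp add: u_def w_def s_def[symmetric])
  have "(w + u) / 2 = (s\<^sup>2 + 1) / (s\<^sup>2 - 1)"
    using \<open>1 < s\<close> less_1_mult[OF \<open>1 < s\<close> \<open>1 < s\<close>]
    by (simp add: u_def w_def s_def[symmetric] field_simps power2_eq_square)
  also have "\<dots> = (a + b) / (b - a)"
    using assms by (simp add: s2 field_simps)
  finally have cheb: "chebyshev k ((a + b) / (b - a)) = (w ^ k + u ^ k) / 2"
    using chebyshev_joukowski[OF wu, of k] by (simp only:)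
  show "0 < chebyshev k ((a + b) / (b - a))"
    unfolding cheb using \<open>0 < u\<close> \<open>0 < w\<close> by (simp add: add_pos_pos)
  have "w ^ k * u ^ k = 1" using wu by (metis power_mult_distrib power_one)
  then have "1 / ((w ^ k + u ^ k) / 2) \<le> 2 / w ^ k * (w ^ k * u ^ k)"
    using \<open>0 < u\<close> \<open>0 < w\<close> by (simp add: frac_le)
  also have "\<dots> = 2 * u ^ k" using \<open>0 < w\<close> by simp
  finally show "1 / chebyshev k ((a + b) / (b - a)) \<le> 2 * u ^ k" unfolding cheb .
qed

fun chebyshev_mat :: "nat \<Rightarrow> real^'n^'n \<Rightarrow> real^'n^'n" where
  "chebyshev_mat 0 Y = mat 1"
| "chebyshev_mat (Suc 0) Y = Y"
| "chebyshev_mat (Suc (Suc k)) Y = 2 *\<^sub>R (Y ** chebyshev_mat (Suc k) Y) - chebyshev_mat k Y"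

lemma chebyshev_mat_eigenvector:
  assumes "Y *v v = l *\<^sub>R v"
  shows "chebyshev_mat k Y *v v = chebyshev k l *\<^sub>R v"
proof (induction k rule: induct_nat_012)
  case (ge2 k)
  then show ?case
    using assms by (simp add: matrix_vector_mult_diff_rdistrib scaleR_matrix_vector_assoc[symmetric]
        matrix_vector_mul_assoc[symmetric] matrix_vector_mult_scaleR algebra_simps)
qed (simp_all add: assms)

lemma chebyshev_mat_invariant_subspace:
  assumes S: "subspace S" and Y_inv: "\<And>x. x \<in> S \<Longrightarrow> Y *v x \<in> S" and "x \<in> S"
  shows "chebyshev_mat k Y *v x \<in> S"
  using \<open>x \<in> S\<close>
proof (induction k arbitrary: x rule: induct_nat_012)
  case (ge2 k)
  then show ?case
    using S Y_inv by (simp add: matrix_vector_mult_diff_rdistrib scaleR_matrix_vector_assoc[symmetric]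
        matrix_vector_mul_assoc[symmetric] subspace_diff subspace_scale)
qed (simp_all add: Y_inv)

lemma matrix_add_rdistrib: "((A :: 'a::semiring_1^'n^'m) + B) ** C = A ** C + B ** C"
  by (simp add: matrix_matrix_mult_def vec_eq_iff sum.distrib algebra_simps)

lemma matrix_diff_rdistrib: "((A :: 'a::ring_1^'n^'m) - B) ** C = A ** C - B ** C"
  by (simp add: matrix_matrix_mult_def vec_eq_iff sum_subtractf algebra_simps)

lemma matrix_diff_ldistrib: "(A :: 'a::ring_1^'n^'m) ** (B - C) = A ** B - A ** C"
  by (simp add: matrix_matrix_mult_def vec_eq_iff sum_subtractf algebra_simps)

lemma chebyshev_mat_affine_decomp:
  fixes T :: "real^('w::{finite,linorder} \<times> 'b::finite)^('w \<times> 'b)"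
  assumes "blk_banded T h"
  shows "\<exists>Q. chebyshev_mat k (c *\<^sub>R mat 1 - s *\<^sub>R T) = chebyshev k c *\<^sub>R mat 1 + Q ** T
             \<and> blk_banded Q ((k - 1) * h)"
proof (induction k rule: induct_nat_012)
  case 0
  show ?case by (intro exI[of _ 0]) simp
next
  case 1
  have "((- s) *\<^sub>R mat 1) ** T = - (s *\<^sub>R T)"
    by (metis matrix_mul_lid scalar_matrix_assoc scaleR_minus_left)
  then show ?case by (intro exI[of _ "(- s) *\<^sub>R mat 1"]) (simp add: blk_banded_uminus blk_banded_scaleR)
next
  case (ge2 k)
  let ?Y = "c *\<^sub>R mat 1 - s *\<^sub>R T"
  obtain Q0 where Q0: "chebyshev_mat k ?Y = chebyshev k c *\<^sub>R mat 1 + Q0 ** T"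
    and Q0_band: "blk_banded Q0 ((k - 1) * h)" using ge2(1) by blast
  obtain Q1 where Q1: "chebyshev_mat (Suc k) ?Y = chebyshev (Suc k) c *\<^sub>R mat 1 + Q1 ** T"
    and Q1_band: "blk_banded Q1 (k * h)" using ge2(2) by auto
  define Q2 where "Q2 = 2 *\<^sub>R (c *\<^sub>R Q1 - s *\<^sub>R (T ** Q1)) - (2 * s * chebyshev (Suc k) c) *\<^sub>R mat 1 - Q0"
  have "chebyshev_mat (Suc (Suc k)) ?Y = chebyshev (Suc (Suc k)) c *\<^sub>R mat 1 + Q2 ** T"
    by (simp add: Q0 Q1 Q2_def matrix_add_ldistrib matrix_add_rdistrib matrix_diff_ldistrib
        matrix_diff_rdistrib scalar_matrix_assoc[symmetric] matrix_scalar_ac matrix_mul_assoc algebra_simps)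
  moreover have "blk_banded Q2 (Suc k * h)"
  proof -
    have "blk_banded (T ** Q1) (Suc k * h)" using blk_banded_mult[OF assms Q1_band] by simp
    moreover have "blk_banded Q1 (Suc k * h)"
      using Q1_band by (rule blk_banded_mono) simp
    moreover have "blk_banded Q0 (Suc k * h)"
      using Q0_band by (rule blk_banded_mono) (simp add: mult_le_mono1 trans_le_add2)
    ultimately show ?thesis
      by (simp add: Q2_def blk_banded_diff blk_banded_scaleR)
  qed
  ultimately show ?case by auto
qed

lemma chebyshev_mat_inverse_remainder:
  fixes B H :: "real^('w::{finite,linorder} \<times> 'b::finite)^('w \<times> 'b)"
  assumes "invertible B" and H_band: "blk_banded H 0" and T_band: "blk_banded (H ** B) h"
    and far: "k = 0 \<or> (\<forall>i\<in>SR. \<forall>j\<in>SC. (k - 1) * h < blk_dist i j)"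
  obtains Z where "chebyshev_mat k (c *\<^sub>R mat 1 - s *\<^sub>R (H ** B)) ** matrix_inv B
      = chebyshev k c *\<^sub>R matrix_inv B + Z"
    and "\<And>x. blk_proj SR (Z *v blk_proj SC x) = 0"
proof -
  obtain Q where Q: "chebyshev_mat k (c *\<^sub>R mat 1 - s *\<^sub>R (H ** B)) = chebyshev k c *\<^sub>R mat 1 + Q ** (H ** B)"
    and Q_band: "blk_banded Q ((k - 1) * h)"
    using chebyshev_mat_affine_decomp[OF T_band] by blast
  have QHB: "(Q ** (H ** B)) ** matrix_inv B = Q ** H"
    using invertible_matrix_inv(1)[OF \<open>invertible B\<close>] by (simp add: matrix_mul_assoc[symmetric])
  have "chebyshev_mat k (c *\<^sub>R mat 1 - s *\<^sub>R (H ** B)) ** matrix_inv B = chebyshev k c *\<^sub>R matrix_inv B + Q ** H"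
    by (simp add: Q matrix_add_rdistrib scalar_matrix_assoc[symmetric] QHB)
  moreover have "blk_proj SR ((Q ** H) *v blk_proj SC x) = 0" for x
  proof (cases "k = 0")
    case True
    then have "Q ** H = 0" using Q QHB by simp
    then show ?thesis by simp
  next
    case False
    then show ?thesis
      using far blk_proj_banded_vanish[OF blk_banded_mult[OF Q_band H_band]] by simp
  qed
  ultimately show ?thesis using that by blast
qed

lemma chebyshev_mat_G_quadratic_form_le:
  fixes G B T :: "real^'n^'n" and k :: nat
  assumes symG: "sym_mat G" and symB: "sym_mat B" and GT: "G ** T = B"
    and "0 < mu" and G_pos: "\<And>x. mu * (norm x)\<^sup>2 \<le> x \<bullet> (G *v x)" and "0 < rho"
    and B_lower: "\<And>x. (1 - rho) * (x \<bullet> (G *v x)) \<le> x \<bullet> (B *v x)"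
    and B_upper: "\<And>x. x \<bullet> (B *v x) \<le> (1 + rho) * (x \<bullet> (G *v x))"
  defines "F \<equiv> chebyshev_mat k ((1 / rho) *\<^sub>R mat 1 - (1 / rho) *\<^sub>R T)"
  shows "(F *v y) \<bullet> (G *v (F *v y)) \<le> y \<bullet> (G *v y)"
proof -
  let ?Y = "(1 / rho) *\<^sub>R mat 1 - (1 / rho) *\<^sub>R T"
  have Y_mult: "?Y *v x = (1 / rho) *\<^sub>R (x - T *v x)" for x
    by (simp add: matrix_vector_mult_diff_rdistrib scaleR_matrix_vector_assoc[symmetric] scaleR_diff_right)
  have "(F *v y) \<bullet> (G *v (F *v y)) \<le> 1\<^sup>2 * (y \<bullet> (G *v y))"
  proof (rule G_quadratic_form_le_by_eigenvalues[OF symG symB GT \<open>0 < mu\<close> G_pos B_lower B_upper,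
        where phi = "\<lambda>l. chebyshev k ((1 - l) / rho)"])
    show "F *v x \<in> S" if "subspace S" "\<And>y. y \<in> S \<Longrightarrow> T *v y \<in> S" "x \<in> S" for S x
      unfolding F_def using that
      by (intro chebyshev_mat_invariant_subspace) (simp_all add: Y_mult subspace_diff subspace_scale)
    show "F *v v = chebyshev k ((1 - l) / rho) *\<^sub>R v" if "T *v v = l *\<^sub>R v" for v l
      unfolding F_def using that
      by (intro chebyshev_mat_eigenvector) (simp only: Y_mult, simp add: algebra_simps diff_divide_distrib)
    show "\<bar>chebyshev k ((1 - l) / rho)\<bar> \<le> 1" if "1 - rho \<le> l" "l \<le> 1 + rho" for l
      using that \<open>0 < rho\<close> by (intro abs_chebyshev_le_1) (simp add: abs_le_iff divide_le_eq)
  qed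
  then show ?thesis by simp
qed

lemma chebyshev_mat_preconditioned_inverse_norm_le:
  fixes G B T Binv :: "real^'n^'n" and k :: nat
  assumes symG: "sym_mat G" and symB: "sym_mat B" and GT: "G ** T = B"
    and "0 < al" and G_pos: "\<And>x. al * (norm x)\<^sup>2 \<le> x \<bullet> (G *v x)" and "0 < rho" "rho < 1"
    and B_lower: "\<And>x. (1 - rho) * (x \<bullet> (G *v x)) \<le> x \<bullet> (B *v x)"
    and B_upper: "\<And>x. x \<bullet> (B *v x) \<le> (1 + rho) * (x \<bullet> (G *v x))"
    and Binv: "B ** Binv = mat 1"
  defines "F \<equiv> chebyshev_mat k ((1 / rho) *\<^sub>R mat 1 - (1 / rho) *\<^sub>R T)"
  shows "norm (F *v (Binv *v x)) \<le> norm x / (al * (1 - rho))"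
proof -
  define a where "a = al * (1 - rho)"
  have "0 < a" using \<open>0 < al\<close> \<open>rho < 1\<close> by (simp add: a_def)
  have scaled_G: "a * (norm z)\<^sup>2 \<le> (1 - rho) * (z \<bullet> (G *v z))" for z
    using mult_left_mono[OF G_pos[of z], of "1 - rho"] \<open>rho < 1\<close> by (simp add: a_def algebra_simps)
  define y where "y = Binv *v x"
  have "B *v y = x" by (simp add: y_def matrix_vector_mul_assoc Binv)
  have "a * (norm (F *v y))\<^sup>2 \<le> (1 - rho) * ((F *v y) \<bullet> (G *v (F *v y)))" by (rule scaled_G)
  also have "\<dots> \<le> (1 - rho) * (y \<bullet> (G *v y))"
    using chebyshev_mat_G_quadratic_form_le[OF symG symB GT \<open>0 < al\<close> G_pos \<open>0 < rho\<close> B_lower B_upper]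
      \<open>rho < 1\<close> by (intro mult_left_mono) (simp_all add: F_def)
  also have "\<dots> \<le> y \<bullet> (B *v y)" by (rule B_lower)
  also have "\<dots> \<le> (norm x)\<^sup>2 / a"
    using quadratic_form_le_norm_image[OF \<open>0 < a\<close>, of y B] scaled_G[of y] B_lower[of y] \<open>B *v y = x\<close>
    by simp
  finally have "(norm (F *v y))\<^sup>2 \<le> (norm x / a)\<^sup>2"
    using \<open>0 < a\<close> by (simp add: power_divide pos_le_divide_eq power2_eq_square algebra_simps)
  then have "norm (F *v y) \<le> norm x / a"
    by (rule power2_le_imp_le) (use \<open>0 < a\<close> in simp)
  then show ?thesis by (simp add: a_def y_def)
qed

lemma blk_proj_norm_le_of_approx:
  assumes approx: "F ** Binv = t *\<^sub>R Binv + Z" and "0 < t" and "0 \<le> c"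
    and Z_vanish: "\<And>x. blk_proj SR (Z *v blk_proj SC x) = 0"
    and F_bound: "\<And>x. norm (F *v (Binv *v x)) \<le> c * norm x"
  shows "norm (blk_proj SR (Binv *v blk_proj SC x)) \<le> c / t * norm x"
proof -
  define xc where "xc = blk_proj SC x"
  have "Binv *v xc = (1 / t) *\<^sub>R (F *v (Binv *v xc)) - (1 / t) *\<^sub>R (Z *v xc)"
    using \<open>0 < t\<close>
    by (simp add: matrix_vector_mul_assoc approx matrix_vector_mult_add_rdistrib
        scaleR_matrix_vector_assoc[symmetric] scaleR_add_right)
  then have "blk_proj SR (Binv *v xc)
      = (1 / t) *\<^sub>R blk_proj SR (F *v (Binv *v xc)) - (1 / t) *\<^sub>R blk_proj SR (Z *v xc)"
    by (metis blk_proj_diff blk_proj_scaleR)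
  then have "blk_proj SR (Binv *v xc) = (1 / t) *\<^sub>R blk_proj SR (F *v (Binv *v xc))"
    using Z_vanish[of x] by (simp add: xc_def)
  then have "norm (blk_proj SR (Binv *v xc)) \<le> (1 / t) * norm (F *v (Binv *v xc))"
    using \<open>0 < t\<close> divide_right_mono[OF norm_blk_proj_le, of t] by simp
  also have "\<dots> \<le> (1 / t) * (c * norm x)"
    using F_bound[of xc] mult_left_mono[OF norm_blk_proj_le \<open>0 \<le> c\<close>, of SC x] \<open>0 < t\<close>
    by (simp add: xc_def divide_right_mono)
  finally show ?thesis by (simp add: xc_def)
qed

lemma blk_proj_inverse_norm_le_chebyshev:
  fixes A D :: "real^('w::{finite,linorder} \<times> 'b::finite)^('w \<times> 'b)" and k :: nat
  assumes symA: "sym_mat A" and A_lower: "\<And>x. a0 * (norm x)\<^sup>2 \<le> x \<bullet> (A *v x)"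
    and A_upper: "\<And>x. x \<bullet> (A *v x) \<le> b0 * (norm x)\<^sup>2" and "0 < a0" "a0 < b0"
    and A_band: "blk_banded A h" and D_psd: "pos_semidef_mat D" and D_band: "blk_banded D 0"
    and far: "k = 0 \<or> (\<forall>i\<in>SR. \<forall>j\<in>SC. (k - 1) * h < blk_dist i j)"
  shows "norm (blk_proj SR (matrix_inv (A + D) *v blk_proj SC x))
           \<le> 2 * ((sqrt (b0 / a0) - 1) / (sqrt (b0 / a0) + 1)) ^ k / a0 * norm x"
proof -
  define al rho where "al = (a0 + b0) / 2" and "rho = (b0 - a0) / (a0 + b0)"
  have "0 < al" "0 < rho" "rho < 1" "1 / rho = (a0 + b0) / (b0 - a0)"
    using \<open>0 < a0\<close> \<open>a0 < b0\<close> by (simp_all add: al_def rho_def)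
  have a0_eq: "al * (1 - rho) = a0" and b0_eq: "al * (1 + rho) = b0"
    using \<open>0 < a0\<close> \<open>a0 < b0\<close> by (simp_all add: al_def rho_def field_simps)
  define G B where "G = al *\<^sub>R mat 1 + D" and "B = A + D"
  note G = blk_diag_shift_preconditioner[OF D_psd D_band \<open>0 < al\<close>, folded G_def]
  have D_nonneg: "0 \<le> x \<bullet> (D *v x)" for x using D_psd by (simp add: pos_semidef_mat_def)
  have B_lower: "(1 - rho) * (x \<bullet> (G *v x)) \<le> x \<bullet> (B *v x)"
    and B_upper: "x \<bullet> (B *v x) \<le> (1 + rho) * (x \<bullet> (G *v x))" for x
    using quadratic_form_shift_bounds[of rho al x A D] \<open>0 < rho\<close> A_lower A_upper D_nonneg
    by (simp_all add: G_def B_def a0_eq b0_eq)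
  have symB: "sym_mat B"
    using symA D_psd by (simp add: B_def pos_semidef_mat_def sym_mat_def transpose_def vec_eq_iff)
  have "a0 * (norm x)\<^sup>2 \<le> x \<bullet> (B *v x)" for x
    using A_lower[of x] D_nonneg[of x] by (simp add: B_def matrix_vector_mult_add_rdistrib inner_add_right)
  with \<open>0 < a0\<close> have "invertible B" by (rule coercive_quadratic_form_invertible)
  define T where "T = matrix_inv G ** B"
  have GT: "G ** T = B" using G(3) by (simp add: T_def matrix_mul_assoc)
  have T_band: "blk_banded T h"
    using blk_banded_mult[OF G(4) blk_banded_add[OF A_band blk_banded_mono[OF D_band]]]
    by (simp add: T_def B_def)
  define t where "t = chebyshev k (1 / rho)"
  have "0 < t" and t_inv: "1 / t \<le> 2 * ((sqrt (b0 / a0) - 1) / (sqrt (b0 / a0) + 1)) ^ k"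
    using chebyshev_condition_number_bound[OF \<open>0 < a0\<close> \<open>a0 < b0\<close>, of k]
      \<open>1 / rho = (a0 + b0) / (b0 - a0)\<close> by (simp_all add: t_def)
  obtain Z where approx: "chebyshev_mat k ((1 / rho) *\<^sub>R mat 1 - (1 / rho) *\<^sub>R T) ** matrix_inv B
      = t *\<^sub>R matrix_inv B + Z" and vanish: "\<And>x. blk_proj SR (Z *v blk_proj SC x) = 0"
    using chebyshev_mat_inverse_remainder[OF \<open>invertible B\<close> G(4) T_band[unfolded T_def] far]
    unfolding t_def T_def by blast
  have "norm (blk_proj SR (matrix_inv B *v blk_proj SC x)) \<le> (1 / a0) / t * norm x"
    using chebyshev_mat_preconditioned_inverse_norm_le[OF G(1) symB GT \<open>0 < al\<close> G(2)
        \<open>0 < rho\<close> \<open>rho < 1\<close> B_lower B_upper invertible_matrix_inv(1)[OF \<open>invertible B\<close>]]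
    by (intro blk_proj_norm_le_of_approx[OF approx \<open>0 < t\<close> _ vanish])
      (simp_all add: a0_eq \<open>0 < a0\<close> less_imp_le)
  also have "\<dots> = (1 / t) * (norm x / a0)" by simp
  also have "\<dots> \<le> 2 * ((sqrt (b0 / a0) - 1) / (sqrt (b0 / a0) + 1)) ^ k * (norm x / a0)"
    using t_inv \<open>0 < a0\<close> by (intro mult_right_mono) auto
  finally show ?thesis by (simp add: B_def)
qed

lemma nat_ceiling_divide_pred_mult_less:
  fixes d h :: nat
  assumes "0 < h"
  shows "nat \<lceil>real d / real h\<rceil> = 0 \<or> (nat \<lceil>real d / real h\<rceil> - 1) * h < d"
proof (cases "nat \<lceil>real d / real h\<rceil> = 0")
  case False
  then have "real (nat \<lceil>real d / real h\<rceil> - 1) < real d / real h"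
    using ceiling_correct[of "real d / real h"] by (simp add: of_nat_diff)
  then have "(nat \<lceil>real d / real h\<rceil> - 1) * h < d"
    using \<open>0 < h\<close> by (simp add: pos_less_divide_eq flip: of_nat_mult)
  then show ?thesis ..
qed simp

lemma power_nat_ceiling_divide_le_powr:
  fixes u :: real and d h :: nat
  assumes "0 < u" "u < 1"
  shows "u ^ nat \<lceil>real d / real h\<rceil> \<le> (u powr (1 / real h)) ^ d"
proof -
  have "u ^ nat \<lceil>real d / real h\<rceil> = u powr real (nat \<lceil>real d / real h\<rceil>)"
    using \<open>0 < u\<close> by (rule powr_realpow[symmetric])
  also have "\<dots> \<le> u powr (real d / real h)"
    using assms by (intro powr_mono') (simp_all add: of_nat_ceiling)
  also have "\<dots> = (u powr (1 / real h)) ^ d"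
    using \<open>0 < u\<close> by (simp add: powr_powr powr_realpow[symmetric])
  finally show ?thesis .
qed

theorem lemma3:
  fixes A D :: "real^('w::{finite,linorder} \<times> 'b::finite)^('w \<times> 'b)"
    and q :: nat and a0 b0 :: real and SR SC :: "'w set"
  assumes A_pd: "pos_def_mat A"
    and q_pos: "0 < q" and q_even: "even q"
    and A_band: "\<forall>i j. 2 * blk_dist i j > q \<longrightarrow> blk A i j = 0"
    and a0_def: "a0 = Min (mat_spectrum A)" and b0_def: "b0 = Max (mat_spectrum A)"
    and a0_pos: "0 < a0" and a0_b0: "a0 < b0"
    and D_diag: "\<forall>i j. i \<noteq> j \<longrightarrow> blk D i j = 0"
    and D_psd: "\<forall>i. pos_semidef_mat (blk D i i)"
    and SR_ne: "SR \<noteq> {}" and SC_ne: "SC \<noteq> {}"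
  shows "blk_sub_norm (matrix_inv (A + D)) SR SC
           \<le> (2 / a0) * (((sqrt (b0 / a0) - 1) / (sqrt (b0 / a0) + 1)) powr (2 / real q))
               ^ Min {blk_dist i j | i j. i \<in> SR \<and> j \<in> SC}"
proof -
  have symA: "sym_mat A" using A_pd by (simp add: pos_def_mat_def)
  note A_bounds = quadratic_form_spectrum_bounds[OF symA, folded a0_def b0_def]
  have D_band: "blk_banded D 0" using D_diag by (simp add: blk_banded_iff_blk)
  have "pos_semidef_mat D" using pos_semidef_blk_diag[OF D_band] D_psd by blast
  obtain h where q: "q = 2 * h" using q_even by (rule evenE)
  have "0 < h" using q_pos q by simp
  have A_band_h: "blk_banded A h" using A_band q by (simp add: blk_banded_iff_blk)
  define d where "d = Min {blk_dist i j | i j. i \<in> SR \<and> j \<in> SC}"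
  have d_le: "d \<le> blk_dist i j" if "i \<in> SR" "j \<in> SC" for i j
    unfolding d_def using that by (intro Min_le) (auto intro: finite_image_set2)
  define k where "k = nat \<lceil>real d / real h\<rceil>"
  have far: "k = 0 \<or> (\<forall>i\<in>SR. \<forall>j\<in>SC. (k - 1) * h < blk_dist i j)"
    using nat_ceiling_divide_pred_mult_less[OF \<open>0 < h\<close>, of d] d_le
    unfolding k_def by (meson order_less_le_trans)
  define s where "s = sqrt (b0 / a0)"
  define u where "u = (s - 1) / (s + 1)"
  have "1 < s" using a0_pos a0_b0 by (simp add: s_def)
  then have "0 < u" "u < 1" by (simp_all add: u_def)
  have "blk_sub_norm (matrix_inv (A + D)) SR SC \<le> 2 * u ^ k / a0"
    unfolding blk_sub_norm_def u_def s_def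
    by (intro onorm_le blk_proj_inverse_norm_le_chebyshev[OF symA A_bounds a0_pos a0_b0 A_band_h
          \<open>pos_semidef_mat D\<close> D_band far])
  also have "\<dots> \<le> (2 / a0) * (u powr (2 / real q)) ^ d"
    using power_nat_ceiling_divide_le_powr[OF \<open>0 < u\<close> \<open>u < 1\<close>, of d h] a0_pos
    by (simp add: k_def q divide_right_mono)
  finally show ?thesis unfolding u_def s_def d_def .
qed

end
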